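(* Let $\lambda$ be a well-behaved hypergraph width measure, $k$ an integer, and $H$ a hypergraph with $\lambda\text{-}tw(H)\le k$. Let $H_0,H_1,\dots,H_\ell$ be a sequence with $H_0=H$, where each $H_{i+1}$ is obtained from $H_i$ by adding an edge $\{u,v\}$ ($u\ne v$) such that $\lambda_{H_0}(N_{\underline{H_i}}(u)\cap N_{\underline{H_i}}(v))>k$. Then every tree decomposition of $H$ of $\lambda$-width at most $k$ is a tree decomposition of $H_\ell$. Furthermore, if $S$ is an $(A,B)$-separator of $H$ with $\lambda_H(S)\le k$, then $S$ is an $(A,B)$-separator of each $H_i$.
   Context: A hypergraph $H$ has finite vertex set $V(H)$ and edge set $E(H)$ of subsets of $V(H)$; $||H||$ is the size of its encoding. The Gaifman graph $\underline{H}$ is the graph on $V(H)$ with two distinct vertices adjacent iff they lie in a common edge; $N_G(u)$ is the neighbourhood of $u$ in graph $G$. A set $S$ is an $(A,B)$-separator of $H$ if $A\cap B\subseteq S$ and every path in $\underline{H}$ from a vertex of $A$ to a vertex of $B$ contains a vertex of $S$. A tree decomposition of $H$ is a tree $T$ with bags $B_t\subseteq V(H)$ such that nodes containing a given vertex form a connected subtree and every edge of $\underline{H}$ is inside some bag. A width measure $\lambda$ assigns to each hypergraph $H$ a real function $\lambda_H$ on subsets of $V(H)$; the $\lambda$-width of a decomposition is $\max_t\lambda_H(B_t)$ and $\lambda\text{-}tw(H)$ is the minimum $\lambda$-width over tree decompositions of $H$. $\lambda$ is well-behaved if: (1) $\lambda_H(\{x\})\ge1$; (2) $\lambda_H(S\cup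 T)\le\lambda_H(S)+\lambda_H(T)$; (3) equality in (2) for disjoint $S,T$ with no edge of $\underline{H}$ between them; (4) $\lambda_F(S)\le\lambda_H(T)$ whenever $V(H)\subseteq V(F)$, $E(H)\subseteq E(F)$ and $S\subseteq T$; (5) $\lambda_H(S)\le k$ is decidable in time $||H||^{O(k)}$. *)

theory Defs
  imports Complex_Main
begin

record 'v hypergraph =
  verts :: "'v set"
  edges :: "'v set set"

definition hypergraph :: "'v hypergraph \<Rightarrow> bool" where
  "hypergraph H \<longleftrightarrow> finite (verts H) \<and> (\<forall>e\<in>edges H. e \<subseteq> verts H)"

text \<open>Adjacency in the Gaifman graph.\<close>
definition gadj :: "'v hypergraph \<Rightarrow> 'v \<Rightarrow> 'v \<Rightarrow> bool" where
  "gadj H u v \<longleftrightarrow> u \<noteq> v \<and> (\<exists>e\<in>edges H. u \<in> e \<and> v \<in> e)"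

definition gnbr :: "'v hypergraph \<Rightarrow> 'v \<Rightarrow> 'v set" where
  "gnbr H u = {w \<in> verts H. gadj H u w}"

definition add_edge :: "'v hypergraph \<Rightarrow> 'v \<Rightarrow> 'v \<Rightarrow> 'v hypergraph" where
  "add_edge H u v = \<lparr>verts = verts H, edges = insert {u, v} (edges H)\<rparr>"

definition gpath :: "'v hypergraph \<Rightarrow> 'v list \<Rightarrow> bool" where
  "gpath H xs \<longleftrightarrow> xs \<noteq> [] \<and> set xs \<subseteq> verts H \<and>
     (\<forall>i. Suc i < length xs \<longrightarrow> gadj H (xs ! i) (xs ! Suc i))"

definition separator :: "'v hypergraph \<Rightarrow> 'v set \<Rightarrow> 'v set \<Rightarrow> 'v set \<Rightarrow> bool" where
  "separator H A B S \<longleftrightarrow> A \<inter> B \<subseteq> S \<and>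
     (\<forall>xs. gpath H xs \<and> hd xs \<in> A \<and> last xs \<in> B \<longrightarrow> set xs \<inter> S \<noteq> {})"

definition has_cycle :: "('t \<Rightarrow> 't \<Rightarrow> bool) \<Rightarrow> bool" where
  "has_cycle adj \<longleftrightarrow> (\<exists>xs. length xs \<ge> 3 \<and> distinct xs \<and>
      (\<forall>i. Suc i < length xs \<longrightarrow> adj (xs ! i) (xs ! Suc i)) \<and> adj (last xs) (hd xs))"

definition connected_in :: "('t \<Rightarrow> 't \<Rightarrow> bool) \<Rightarrow> 't set \<Rightarrow> bool" where
  "connected_in adj M \<longleftrightarrow>
     (\<forall>x\<in>M. \<forall>y\<in>M. (x, y) \<in> {(a, b). adj a b \<and> a \<in> M \<and> b \<in> M}\<^sup>*)"

definition is_tree :: "'t set \<Rightarrow> ('t \<Rightarrow> 't \<Rightarrow> bool) \<Rightarrow> bool" where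
  "is_tree N adj \<longleftrightarrow> finite N \<and> N \<noteq> {} \<and>
     (\<forall>x y. adj x y \<longrightarrow> x \<in> N \<and> y \<in> N \<and> x \<noteq> y \<and> adj y x) \<and>
     connected_in adj N \<and> \<not> has_cycle adj"

definition tree_decomp ::
  "'v hypergraph \<Rightarrow> 't set \<Rightarrow> ('t \<Rightarrow> 't \<Rightarrow> bool) \<Rightarrow> ('t \<Rightarrow> 'v set) \<Rightarrow> bool" where
  "tree_decomp H N adj bag \<longleftrightarrow> is_tree N adj \<and>
     (\<forall>t\<in>N. bag t \<subseteq> verts H) \<and>
     (\<forall>v\<in>verts H. \<exists>t\<in>N. v \<in> bag t) \<and>
     (\<forall>v\<in>verts H. connected_in adj {t \<in> N. v \<in> bag t}) \<and>
     (\<forall>u v. gadj H u v \<longrightarrow> (\<exists>t\<in>N. u \<in> bag t \<and> v \<in> bag t))"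

type_synonym 'v width_measure = "'v hypergraph \<Rightarrow> 'v set \<Rightarrow> real"

definition decomp_width ::
  "'v width_measure \<Rightarrow> 'v hypergraph \<Rightarrow> 't set \<Rightarrow> ('t \<Rightarrow> 'v set) \<Rightarrow> real" where
  "decomp_width lam H N bag = Max ((\<lambda>t. lam H (bag t)) ` N)"

text \<open>lambda-tw(H) <= k: some tree decomposition has lambda-width at most k.
  Node sets are taken in nat (every finite tree is isomorphic to one on nat).\<close>
definition tw_le :: "'v width_measure \<Rightarrow> 'v hypergraph \<Rightarrow> real \<Rightarrow> bool" where
  "tw_le lam H k \<longleftrightarrow> (\<exists>(N::nat set) adj bag. tree_decomp H N adj bag \<and> decomp_width lam H N bag \<le> k)"

text \<open>Conditions (1)-(4) of well-behavedness (condition (5), a running-time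
  bound, is not expressed).\<close>
definition well_behaved :: "'v width_measure \<Rightarrow> bool" where
  "well_behaved lam \<longleftrightarrow>
    (\<forall>H x. hypergraph H \<and> x \<in> verts H \<longrightarrow> lam H {x} \<ge> 1) \<and>
    (\<forall>H S T. hypergraph H \<and> S \<subseteq> verts H \<and> T \<subseteq> verts H \<longrightarrow>
        lam H (S \<union> T) \<le> lam H S + lam H T) \<and>
    (\<forall>H S T. hypergraph H \<and> S \<subseteq> verts H \<and> T \<subseteq> verts H \<and> S \<inter> T = {} \<and>
        (\<forall>s\<in>S. \<forall>t\<in>T. \<not> gadj H s t) \<longrightarrow> lam H (S \<union> T) = lam H S + lam H T) \<and>
    (\<forall>F H S T. hypergraph F \<and> hypergraph H \<and> verts H \<subseteq> verts F \<and> edges H \<subseteq> edges F \<and>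
        S \<subseteq> T \<and> T \<subseteq> verts H \<longrightarrow> lam F S \<le> lam H T)"

end

theory Submission
  imports Defs
begin

text \<open>If the endpoints u, v of an added edge shared no bag of a decomposition of width at most k,
  their subtrees would be disjoint. The subtree of every common neighbour meets both, and in a tree
  all connected sets meeting two disjoint subtrees pass through a single node; so the whole common
  neighbourhood lies in one bag, whose width is then at least \<lambda>(N(u) \<inter> N(v)) > k.
  For a separator S with \<lambda>(S) \<le> k, monotonicity of \<lambda> yields a common neighbour w of u and v
  outside S, and every path through the new edge can detour via w.\<close>

definition adj_on :: "('t \<Rightarrow> 't \<Rightarrow> bool) \<Rightarrow> 't set \<Rightarrow> ('t \<times> 't) set" where
  "adj_on adj M = {(a, b). adj a b \<and> a \<in> M \<and> b \<in> M}"

lemma connected_in_iff: "connected_in adj M \<longleftrightarrow> (\<forall>x\<in>M. \<forall>y\<in>M. (x, y) \<in> (adj_on adj M)\<^sup>*)"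
  by (simp add: connected_in_def adj_on_def)

lemma gpath_iff: "gpath H xs \<longleftrightarrow> xs \<noteq> [] \<and> set xs \<subseteq> verts H \<and> successively (gadj H) xs"
  by (simp add: gpath_def successively_conv_nth)

lemma has_cycleI:
  assumes "distinct xs" "3 \<le> length xs" "successively adj xs" "adj (last xs) (hd xs)"
  shows "has_cycle adj"
  using assms by (auto simp: has_cycle_def successively_conv_nth)

lemma rtrancl_adj_on_distinct_path:
  assumes "(x, y) \<in> (adj_on adj M)\<^sup>*" "x \<in> M"
  shows "\<exists>xs. xs \<noteq> [] \<and> distinct xs \<and> successively adj xs \<and> hd xs = x \<and> last xs = y \<and> set xs \<subseteq> M"
  using assms(1)
proof (induction rule: rtrancl_induct)
  case base
  show ?case using assms(2) by (intro exI[of _ "[x]"]) simp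
next
  case (step y z)
  then obtain xs where xs: "xs \<noteq> []" "distinct xs" "successively adj xs" "hd xs = x" "last xs = y"
      "set xs \<subseteq> M" and yz: "adj y z" "z \<in> M"
    by (auto simp: adj_on_def)
  show ?case
  proof (cases "z \<in> set xs")
    case True
    then obtain as bs where split: "xs = (as @ [z]) @ bs" by (auto dest: split_list)
    have "hd (as @ [z]) = x" using xs(4) split by (cases as) auto
    then show ?thesis
      using xs split by (intro exI[of _ "as @ [z]"]) (auto simp: successively_append_iff)
  next
    case False
    then show ?thesis
      using xs yz by (intro exI[of _ "xs @ [z]"]) (auto simp: successively_append_iff)
  qed
qed

lemma connected_in_crossing_edge:
  assumes "connected_in adj Z" "a \<in> Z" "b \<in> Z" "b \<in> D" "a \<notin> D"
  obtains q p where "adj q p" "q \<in> Z" "p \<in> Z" "q \<in> D" "p \<notin> D"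
proof -
  have "(b, a) \<in> (adj_on adj Z)\<^sup>*"
    using assms(1-3) unfolding connected_in_iff by blast
  then show ?thesis
    using assms(4,5) that by (induction rule: rtrancl_induct) (auto simp: adj_on_def)
qed

lemma adj_on_Image_subset: "Y \<subseteq> M \<Longrightarrow> (adj_on adj M)\<^sup>* `` Y \<subseteq> M"
  by (auto simp: adj_on_def elim: rtranclE)

lemma adj_on_Image_step:
  assumes "z \<in> (adj_on adj M)\<^sup>* `` Y" "adj z z'" "z \<in> M" "z' \<in> M"
  shows "z' \<in> (adj_on adj M)\<^sup>* `` Y"
proof -
  have "(z, z') \<in> adj_on adj M"
    using assms(2-4) by (simp add: adj_on_def)
  with assms(1) show ?thesis
    by (blast intro: rtrancl_into_rtrancl)
qed

lemma connected_component_connected: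
  assumes sym: "\<And>x y. adj x y \<Longrightarrow> adj y x" and "Y \<subseteq> M" "connected_in adj Y"
  shows "connected_in adj ((adj_on adj M)\<^sup>* `` Y)"
proof -
  let ?D = "(adj_on adj M)\<^sup>* `` Y"
  have into_D: "(y, p) \<in> (adj_on adj ?D)\<^sup>*" if "y \<in> Y" "(y, p) \<in> (adj_on adj M)\<^sup>*" for y p
    using that(2)
  proof (induction rule: rtrancl_induct)
    case (step a b)
    then have "(a, b) \<in> adj_on adj ?D"
      using \<open>y \<in> Y\<close> by (auto simp: adj_on_def intro: rtrancl_into_rtrancl)
    with step.IH show ?case by simp
  qed simp
  have "sym (adj_on adj ?D)"
    by (auto simp: sym_def adj_on_def intro: sym)
  then have sym_D: "sym ((adj_on adj ?D)\<^sup>*)"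
    by (rule sym_rtrancl)
  have "adj_on adj Y \<subseteq> adj_on adj ?D"
    by (auto simp: adj_on_def)
  then have Y_D: "(adj_on adj Y)\<^sup>* \<subseteq> (adj_on adj ?D)\<^sup>*"
    by (rule rtrancl_mono)
  show ?thesis
    unfolding connected_in_iff
  proof (intro ballI)
    fix p q assume "p \<in> ?D" "q \<in> ?D"
    then obtain y1 y2 where y: "y1 \<in> Y" "(y1, p) \<in> (adj_on adj M)\<^sup>*"
      "y2 \<in> Y" "(y2, q) \<in> (adj_on adj M)\<^sup>*" by blast
    have "(p, y1) \<in> (adj_on adj ?D)\<^sup>*"
      using symD[OF sym_D into_D[OF y(1,2)]] .
    moreover have "(y1, y2) \<in> (adj_on adj ?D)\<^sup>*"
      using assms(3) y Y_D by (auto simp: connected_in_iff)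
    moreover have "(y2, q) \<in> (adj_on adj ?D)\<^sup>*"
      using into_D[OF y(3,4)] .
    ultimately show "(p, q) \<in> (adj_on adj ?D)\<^sup>*"
      by (meson rtrancl_trans)
  qed
qed

text \<open>Two edges between disjoint connected sets would close a cycle through both sets.\<close>

lemma acyclic_unique_edge_between:
  assumes acyclic: "\<not> has_cycle adj" and sym: "\<And>x y. adj x y \<Longrightarrow> adj y x"
    and P: "connected_in adj P" and Q: "connected_in adj Q" and PQ: "P \<inter> Q = {}"
    and "p \<in> P" "p' \<in> P" "q \<in> Q" "q' \<in> Q" "adj p q" "adj p' q'"
  shows "p = p'"
proof (rule ccontr)
  assume "p \<noteq> p'"
  obtain ps where ps: "ps \<noteq> []" "distinct ps" "successively adj ps" "hd ps = p" "last ps = p'"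
      "set ps \<subseteq> P"
    using P assms(6,7) rtrancl_adj_on_distinct_path by (metis connected_in_iff)
  obtain qs where qs: "qs \<noteq> []" "distinct qs" "successively adj qs" "hd qs = q'" "last qs = q"
      "set qs \<subseteq> Q"
    using Q assms(8,9) rtrancl_adj_on_distinct_path by (metis connected_in_iff)
  have "length ps \<noteq> 1"
    using ps \<open>p \<noteq> p'\<close> by (auto simp: length_Suc_conv)
  with ps(1) qs(1) have "3 \<le> length (ps @ qs)"
    by (cases ps; cases qs) (auto simp: Suc_le_eq)
  moreover have "distinct (ps @ qs)"
    using ps qs PQ by auto
  moreover have "successively adj (ps @ qs)"
    using ps qs assms(11) by (simp add: successively_append_iff)
  moreover have "adj (last (ps @ qs)) (hd (ps @ qs))"
    using ps qs assms(10) by (auto intro: sym)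
  ultimately show False
    using acyclic has_cycleI by blast
qed

text \<open>For disjoint subtrees X and Y, let D be the component of N - X containing Y. A connected set
  meeting X and Y must use an edge from D into X; there is only one such edge, and its end in X is
  the common node.\<close>

lemma tree_disjoint_subtrees_gate:
  assumes tree: "is_tree N adj"
    and X: "X \<subseteq> N" "X \<noteq> {}" "connected_in adj X"
    and Y: "Y \<subseteq> N" "Y \<noteq> {}" "connected_in adj Y"
    and XY: "X \<inter> Y = {}"
  shows "\<exists>s\<in>N. \<forall>Z. connected_in adj Z \<longrightarrow> Z \<inter> X \<noteq> {} \<longrightarrow> Z \<inter> Y \<noteq> {} \<longrightarrow> s \<in> Z"
proof -
  have sym: "\<And>x y. adj x y \<Longrightarrow> adj y x" and in_N: "\<And>x y. adj x y \<Longrightarrow> y \<in> N"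
    and acyclic: "\<not> has_cycle adj" and conn_N: "connected_in adj N"
    using tree unfolding is_tree_def by blast+
  define D where "D = (adj_on adj (N - X))\<^sup>* `` Y"
  have Y_D: "Y \<subseteq> D"
    unfolding D_def by blast
  have D_N: "D \<subseteq> N - X"
    unfolding D_def using Y(1) XY by (intro adj_on_Image_subset) blast
  have conn_D: "connected_in adj D"
    unfolding D_def using connected_component_connected[of adj Y "N - X"] sym Y XY by blast
  have exit: "\<exists>p\<in>Z \<inter> X. \<exists>q\<in>D. adj p q"
    if Z: "connected_in adj Z" "Z \<inter> X \<noteq> {}" "Z \<inter> Y \<noteq> {}" for Z
  proof -
    obtain a b where "a \<in> Z" "a \<in> X" "b \<in> Z" "b \<in> Y"
      using Z by blast
    moreover from this have "b \<in> D" "a \<notin> D"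
      using Y_D D_N by blast+
    ultimately obtain q p where qp: "adj q p" "q \<in> Z" "p \<in> Z" "q \<in> D" "p \<notin> D"
      using connected_in_crossing_edge[OF Z(1)] by metis
    have "p \<in> X"
    proof (rule ccontr)
      assume "p \<notin> X"
      then have "p \<in> D"
        using adj_on_Image_step[of q adj "N - X" Y p] qp D_N in_N unfolding D_def by blast
      with qp(5) show False ..
    qed
    then show ?thesis
      using qp sym by blast
  qed
  obtain s t where st: "s \<in> X" "t \<in> D" "adj s t"
    using exit[OF conn_N] X Y by blast
  have "s \<in> Z" if Z: "connected_in adj Z" "Z \<inter> X \<noteq> {}" "Z \<inter> Y \<noteq> {}" for Z
  proof -
    obtain p q where p: "p \<in> Z" "p \<in> X" and q: "q \<in> D" "adj p q"
      using exit[OF Z] by blast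
    have "X \<inter> D = {}"
      using D_N by blast
    then have "s = p"
      using acyclic_unique_edge_between[OF acyclic sym X(3) conn_D _ st(1) p(2) st(2) q(1) st(3) q(2)] by blast
    then show ?thesis
      using p(1) by simp
  qed
  then show ?thesis
    using st X(1) by blast
qed

lemma gadj_sym: "gadj G u v \<Longrightarrow> gadj G v u"
  by (auto simp: gadj_def)

lemma gadj_add_edge:
  "gadj (add_edge G u v) x y \<longleftrightarrow> gadj G x y \<or> (x \<noteq> y \<and> x \<in> {u, v} \<and> y \<in> {u, v})"
  by (auto simp: gadj_def add_edge_def)

lemma verts_add_edge [simp]: "verts (add_edge G u v) = verts G"
  by (simp add: add_edge_def)

lemma tree_decomp_add_edge:
  assumes "tree_decomp G N adj bag" "\<exists>t\<in>N. u \<in> bag t \<and> v \<in> bag t"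
  shows "tree_decomp (add_edge G u v) N adj bag"
  using assms unfolding tree_decomp_def by (auto simp: gadj_add_edge)

lemma tree_decomp_common_nbrs_in_bag:
  assumes td: "tree_decomp G N adj bag" and uv: "u \<in> verts G" "v \<in> verts G"
    and apart: "\<not> (\<exists>t\<in>N. u \<in> bag t \<and> v \<in> bag t)"
  shows "\<exists>s\<in>N. gnbr G u \<inter> gnbr G v \<subseteq> bag s"
proof -
  let ?T = "\<lambda>x. {t \<in> N. x \<in> bag t}"
  have tree: "is_tree N adj" and cover: "\<forall>x\<in>verts G. \<exists>t\<in>N. x \<in> bag t"
    and conn: "\<forall>x\<in>verts G. connected_in adj (?T x)"
    and edge: "\<forall>x y. gadj G x y \<longrightarrow> (\<exists>t\<in>N. x \<in> bag t \<and> y \<in> bag t)"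
    using td unfolding tree_decomp_def by blast+
  have ne: "?T x \<noteq> {}" if "x \<in> verts G" for x
    using cover that by blast
  have "?T u \<inter> ?T v = {}"
    using apart by blast
  then obtain s where s: "s \<in> N"
      "\<And>Z. connected_in adj Z \<Longrightarrow> Z \<inter> ?T u \<noteq> {} \<Longrightarrow> Z \<inter> ?T v \<noteq> {} \<Longrightarrow> s \<in> Z"
    using tree_disjoint_subtrees_gate[OF tree _ ne[OF uv(1)] conn[rule_format, OF uv(1)]
        _ ne[OF uv(2)] conn[rule_format, OF uv(2)]]
    by blast
  have "w \<in> bag s" if "w \<in> gnbr G u \<inter> gnbr G v" for w
  proof -
    have w: "w \<in> verts G" "gadj G w u" "gadj G w v"
      using that by (auto simp: gnbr_def intro: gadj_sym)
    then have "?T w \<inter> ?T u \<noteq> {}" "?T w \<inter> ?T v \<noteq> {}"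
      using edge by blast+
    then have "s \<in> ?T w"
      using s(2) conn w(1) by blast
    then show ?thesis by simp
  qed
  then show ?thesis
    using s(1) by blast
qed

lemma add_edge_path_reroute:
  assumes w: "gadj G u w" "gadj G v w"
  shows "xs \<noteq> [] \<Longrightarrow> successively (gadj (add_edge G u v)) xs \<Longrightarrow>
    \<exists>ys. ys \<noteq> [] \<and> successively (gadj G) ys \<and> hd ys = hd xs \<and> last ys = last xs \<and>
      set ys \<subseteq> insert w (set xs)"
proof (induction xs)
  case (Cons x xs)
  show ?case
  proof (cases "xs = []")
    case True
    then show ?thesis by (intro exI[of _ "[x]"]) simp
  next
    case False
    with Cons.prems have x_hd: "gadj (add_edge G u v) x (hd xs)"
      and "successively (gadj (add_edge G u v)) xs"
      by (simp_all add: successively_Cons)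
    with Cons.IH False obtain ys where ys: "ys \<noteq> []" "successively (gadj G) ys" "hd ys = hd xs"
        "last ys = last xs" "set ys \<subseteq> insert w (set xs)"
      by blast
    show ?thesis
    proof (cases "gadj G x (hd xs)")
      case True
      then show ?thesis
        using ys False by (intro exI[of _ "x # ys"]) (auto simp: successively_Cons)
    next
      case False
      then have "x \<in> {u, v}" "hd xs \<in> {u, v}"
        using x_hd by (auto simp: gadj_add_edge)
      then have "gadj G x w" "gadj G w (hd ys)"
        using w ys(3) by (auto intro: gadj_sym)
      then show ?thesis
        using ys \<open>xs \<noteq> []\<close> by (intro exI[of _ "x # w # ys"]) (auto simp: successively_Cons)
    qed
  qed
qed simp

lemma separator_add_edge:
  assumes sep: "separator G A B S" and w: "w \<in> gnbr G u \<inter> gnbr G v" "w \<notin> S"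
  shows "separator (add_edge G u v) A B S"
  unfolding separator_def
proof (intro conjI allI impI)
  show "A \<inter> B \<subseteq> S"
    using sep by (simp add: separator_def)
  fix xs assume xs: "gpath (add_edge G u v) xs \<and> hd xs \<in> A \<and> last xs \<in> B"
  show "set xs \<inter> S \<noteq> {}"
  proof
    assume avoid: "set xs \<inter> S = {}"
    have "gadj G u w" "gadj G v w" "w \<in> verts G"
      using w by (auto simp: gnbr_def)
    then obtain ys where ys: "ys \<noteq> []" "successively (gadj G) ys" "hd ys = hd xs"
        "last ys = last xs" "set ys \<subseteq> insert w (set xs)"
      using add_edge_path_reroute xs by (metis gpath_iff)
    then have "gpath G ys"
      using xs \<open>w \<in> verts G\<close> by (auto simp: gpath_iff)
    then have "set ys \<inter> S \<noteq> {}"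
      using sep xs ys(3,4) unfolding separator_def by metis
    then show False
      using ys(5) avoid w(2) by blast
  qed
qed

lemma well_behaved_mono:
  assumes "well_behaved lam" "hypergraph H" "S \<subseteq> T" "T \<subseteq> verts H"
  shows "lam H S \<le> lam H T"
proof -
  have "\<forall>F H S T. hypergraph F \<and> hypergraph H \<and> verts H \<subseteq> verts F \<and> edges H \<subseteq> edges F \<and>
      S \<subseteq> T \<and> T \<subseteq> verts H \<longrightarrow> lam F S \<le> lam H T"
    using assms(1) unfolding well_behaved_def by (elim conjE) assumption
  then show ?thesis
    using assms(2-4) by blast
qed

lemma bag_width_le_decomp_width:
  assumes "finite N" "t \<in> N"
  shows "lam H (bag t) \<le> decomp_width lam H N bag"
  unfolding decomp_width_def using assms by (intro Max_ge) auto

lemma tree_decomp_add_heavy_edge: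
  assumes wb: "well_behaved lam" and hH: "hypergraph H" and VG: "verts G = verts H"
    and td: "tree_decomp G N adj bag" and width: "decomp_width lam H N bag \<le> k"
    and uv: "u \<in> verts G" "v \<in> verts G" and heavy: "k < lam H (gnbr G u \<inter> gnbr G v)"
  shows "tree_decomp (add_edge G u v) N adj bag"
proof (rule tree_decomp_add_edge[OF td], rule ccontr)
  assume "\<not> (\<exists>t\<in>N. u \<in> bag t \<and> v \<in> bag t)"
  then obtain s where s: "s \<in> N" "gnbr G u \<inter> gnbr G v \<subseteq> bag s"
    using tree_decomp_common_nbrs_in_bag[OF td uv] by blast
  have "finite N"
    using td by (simp add: tree_decomp_def is_tree_def)
  have "bag s \<subseteq> verts H"
    using td s(1) VG by (simp add: tree_decomp_def)
  then have "lam H (gnbr G u \<inter> gnbr G v) \<le> lam H (bag s)"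
    by (rule well_behaved_mono[OF wb hH s(2)])
  also have "\<dots> \<le> decomp_width lam H N bag"
    using \<open>finite N\<close> s(1) by (rule bag_width_le_decomp_width)
  finally show False
    using width heavy by simp
qed

lemma separator_add_heavy_edge:
  assumes wb: "well_behaved lam" and hH: "hypergraph H"
    and sep: "separator G A B S" and S: "S \<subseteq> verts H" "lam H S \<le> k"
    and heavy: "k < lam H (gnbr G u \<inter> gnbr G v)"
  shows "separator (add_edge G u v) A B S"
proof -
  have "\<not> gnbr G u \<inter> gnbr G v \<subseteq> S"
  proof
    assume "gnbr G u \<inter> gnbr G v \<subseteq> S"
    then have "lam H (gnbr G u \<inter> gnbr G v) \<le> lam H S"
      by (rule well_behaved_mono[OF wb hH _ S(1)])
    with S(2) heavy show False
      by simp
  qed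
  then obtain w where "w \<in> gnbr G u \<inter> gnbr G v" "w \<notin> S"
    by blast
  then show ?thesis
    by (rule separator_add_edge[OF sep])
qed

theorem mainTheorem17:
  fixes lam :: "'v width_measure" and k :: int and H :: "'v hypergraph"
    and Hs :: "nat \<Rightarrow> 'v hypergraph" and l :: nat
  assumes wb: "well_behaved lam"
    and hH: "hypergraph H"
    and tw: "tw_le lam H (real_of_int k)"
    and H0: "Hs 0 = H"
    and step: "\<forall>i<l. \<exists>u v. u \<noteq> v \<and> u \<in> verts (Hs i) \<and> v \<in> verts (Hs i) \<and>
                 Hs (Suc i) = add_edge (Hs i) u v \<and>
                 lam H (gnbr (Hs i) u \<inter> gnbr (Hs i) v) > real_of_int k"
  shows "(\<forall>(N :: 't set) adj bag. tree_decomp H N adj bag \<and> decomp_width lam H N bag \<le> real_of_int k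
            \<longrightarrow> tree_decomp (Hs l) N adj bag)
       \<and> (\<forall>A B S. S \<subseteq> verts H \<and> separator H A B S \<and> lam H S \<le> real_of_int k
            \<longrightarrow> (\<forall>i\<le>l. separator (Hs i) A B S))"
proof -
  obtain u v where uv: "\<And>i. i < l \<Longrightarrow> u i \<in> verts (Hs i) \<and> v i \<in> verts (Hs i) \<and>
      Hs (Suc i) = add_edge (Hs i) (u i) (v i) \<and>
      real_of_int k < lam H (gnbr (Hs i) (u i) \<inter> gnbr (Hs i) (v i))"
    using step by metis
  have verts: "verts (Hs i) = verts H" if "i \<le> l" for i
    using that by (induction i) (simp_all add: H0 uv)
  have "tree_decomp (Hs i) N adj bag"
    if td: "tree_decomp H N adj bag" and width: "decomp_width lam H N bag \<le> real_of_int k"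
      and "i \<le> l" for N :: "'t set" and adj bag i
    using \<open>i \<le> l\<close>
  proof (induction i)
    case (Suc i)
    with uv[of i] verts[of i] show ?case
      using tree_decomp_add_heavy_edge[OF wb hH _ _ width] by simp
  qed (simp add: H0 td)
  moreover have "separator (Hs i) A B S"
    if S: "S \<subseteq> verts H" "lam H S \<le> real_of_int k" and sep: "separator H A B S" and "i \<le> l"
    for A B S i
    using \<open>i \<le> l\<close>
  proof (induction i)
    case (Suc i)
    with uv[of i] show ?case
      using separator_add_heavy_edge[OF wb hH _ S] by simp
  qed (simp add: H0 sep)
  ultimately show ?thesis
    by blast
qed

end
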